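(* Let $g$ be a rational map of degree $d\ge2$ having $\infty$ as a repelling fixed point. Let $\gamma_1,\dots,\gamma_n$ ($n\ge2$) be independent Jordan curves in $\widehat{\mathbb C}$ such that: 1. $\infty\in\gamma_1\cap\dots\cap\gamma_n$; 2. all fixed points of $g$ in $\mathbb C$ are contained in $\mathrm{Int}(\gamma_1)\cup\dots\cup\mathrm{Int}(\gamma_n)$; 3. for each $k$, the number of poles of $g$ in $\overline{\mathrm{Ext}(\gamma_k)}\setminus\{\infty\}$ equals the number of fixed points of $g$ in $\overline{\mathrm{Ext}(\gamma_k)}\setminus\{\infty\}$. Then the number of poles of $g$ in $\overline{A(\gamma_1,\dots,\gamma_n)}\setminus\{\infty\}$ is exactly $n-1$.
   Context: Jordan curves $\gamma_1,\dots,\gamma_n$ are independent if $\gamma_i\cap\gamma_j$ is finite for $i\neq j$ and for each $k$ a component $\mathrm{Int}(\gamma_k)$ of $\widehat{\mathbb C}\setminus\gamma_k$ (the interior) is designated so that the interiors are pairwise disjoint; $\mathrm{Ext}(\gamma_k)$ is the other component, and $A(\gamma_1,\dots,\gamma_n)=\bigcap_k\mathrm{Ext}(\gamma_k)$. Poles are the points of $g^{-1}(\infty)\cap\mathbb C$, counted with multiplicity equal to their order; fixed points are counted with multiplicity. *)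

theory Defs
  imports "HOL-Complex_Analysis.Complex_Analysis" "HOL-Computational_Algebra.Polynomial"
begin

(* The Riemann sphere: complex option, None = infinity, with the one-point
   compactification topology of the complex plane. *)
definition riemann_sphere_open :: "complex option set \<Rightarrow> bool" where
  "riemann_sphere_open U \<longleftrightarrow>
     open {z. Some z \<in> U} \<and> (None \<in> U \<longrightarrow> compact (- {z. Some z \<in> U}))"

lemma istopology_riemann_sphere_open: "istopology riemann_sphere_open"
proof -
  have I: "riemann_sphere_open (S \<inter> T)"
    if S: "riemann_sphere_open S" and T: "riemann_sphere_open T" for S T
  proof -
    have eq: "{z. Some z \<in> S \<inter> T} = {z. Some z \<in> S} \<inter> {z. Some z \<in> T}" by auto
    have o: "open {z. Some z \<in> S \<inter> T}" unfolding eq using S T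
      by (intro open_Int) (auto simp: riemann_sphere_open_def)
    have c: "compact (- {z. Some z \<in> S \<inter> T})" if "None \<in> S \<inter> T"
    proof -
      have "compact (- {z. Some z \<in> S} \<union> - {z. Some z \<in> T})"
        using S T that by (intro compact_Un) (auto simp: riemann_sphere_open_def)
      moreover have "- {z. Some z \<in> S \<inter> T} = - {z. Some z \<in> S} \<union> - {z. Some z \<in> T}" by auto
      ultimately show ?thesis by simp
    qed
    show ?thesis using o c unfolding riemann_sphere_open_def by blast
  qed
  have U: "riemann_sphere_open (\<Union>K)" if K: "\<forall>U\<in>K. riemann_sphere_open U" for K
  proof -
    have eq: "{z. Some z \<in> \<Union>K} = (\<Union>U\<in>K. {z. Some z \<in> U})" by auto
    have o: "open {z. Some z \<in> \<Union>K}" unfolding eq using K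
      by (auto simp: riemann_sphere_open_def)
    have c: "compact (- {z. Some z \<in> \<Union>K})" if N: "None \<in> \<Union>K"
    proof -
      obtain U where U: "U \<in> K" "None \<in> U" using N by auto
      have c: "compact (- {z. Some z \<in> U})" using K U by (auto simp: riemann_sphere_open_def)
      have sub: "- {z. Some z \<in> \<Union>K} \<subseteq> - {z. Some z \<in> U}" using U by auto
      have cl: "closed (- {z. Some z \<in> \<Union>K})" using o by (simp add: closed_Compl)
      show ?thesis using compact_Int_closed[OF c cl] sub by (metis inf.absorb_iff2)
    qed
    show ?thesis using o c unfolding riemann_sphere_open_def by blast
  qed
  show ?thesis unfolding istopology_def using I U by blast
qed

definition riemann_sphere :: "complex option topology" where
  "riemann_sphere = topology riemann_sphere_open"

definition jordan_curve_RS :: "complex option set \<Rightarrow> bool" where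
  "jordan_curve_RS \<gamma> \<longleftrightarrow>
     (\<exists>f. continuous_map (subtopology euclidean (sphere (0::complex) 1)) riemann_sphere f
          \<and> inj_on f (sphere 0 1) \<and> f ` sphere 0 1 = \<gamma>)"

definition independent_jordan_curves ::
  "nat \<Rightarrow> (nat \<Rightarrow> complex option set) \<Rightarrow> (nat \<Rightarrow> complex option set)
       \<Rightarrow> (nat \<Rightarrow> complex option set) \<Rightarrow> bool" where
  "independent_jordan_curves n \<gamma> Intr Ext \<longleftrightarrow>
     (\<forall>k\<in>{1..n}. jordan_curve_RS (\<gamma> k)) \<and>
     (\<forall>i\<in>{1..n}. \<forall>j\<in>{1..n}. i \<noteq> j \<longrightarrow> finite (\<gamma> i \<inter> \<gamma> j)) \<and>
     (\<forall>k\<in>{1..n}.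
        Intr k \<in> connected_components_of (subtopology riemann_sphere (- \<gamma> k)) \<and>
        Ext k \<in> connected_components_of (subtopology riemann_sphere (- \<gamma> k)) \<and>
        Intr k \<noteq> Ext k) \<and>
     (\<forall>i\<in>{1..n}. \<forall>j\<in>{1..n}. i \<noteq> j \<longrightarrow> Intr i \<inter> Intr j = {})"

(* Rational map g = p/q (p, q coprime, q \<noteq> 0) on the finite plane. *)
definition rat_fun :: "complex poly \<Rightarrow> complex poly \<Rightarrow> complex \<Rightarrow> complex" where
  "rat_fun p q z = poly p z / poly q z"

definition rat_degree :: "complex poly \<Rightarrow> complex poly \<Rightarrow> nat" where
  "rat_degree p q = max (degree p) (degree q)"

(* infinity is a repelling fixed point: in the chart w = 1/z, the map
   w \<mapsto> 1/g(1/w) extends holomorphically to 0, fixes 0, and has multiplier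
   of modulus > 1 there. *)
definition repelling_fixed_at_infinity :: "complex poly \<Rightarrow> complex poly \<Rightarrow> bool" where
  "repelling_fixed_at_infinity p q \<longleftrightarrow>
     (\<exists>r>0. \<exists>G. G holomorphic_on ball 0 r \<and> G 0 = 0 \<and>
        (\<forall>w\<in>ball 0 r - {0}. G w = inverse (rat_fun p q (inverse w))) \<and>
        1 < cmod (deriv G 0))"

definition pole_count :: "complex poly \<Rightarrow> complex poly \<Rightarrow> complex set \<Rightarrow> nat" where
  "pole_count p q S = (\<Sum>z\<in>{z\<in>S. poly q z = 0}. order z q)"

(* Finite fixed points of p/q are the roots of p - z q; multiplicity = order. *)
definition fixpt_count :: "complex poly \<Rightarrow> complex poly \<Rightarrow> complex set \<Rightarrow> nat" where
  "fixpt_count p q S =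
     (\<Sum>z\<in>{z\<in>S. poly (p - [:0, 1:] * q) z = 0}. order z (p - [:0, 1:] * q))"

definition finite_part :: "complex option set \<Rightarrow> complex set" where
  "finite_part X = {z. Some z \<in> X}"

end

theory Submission
  imports Defs "HOL-Computational_Algebra.Fundamental_Theorem_Algebra"
begin

text \<open>
  In the chart \<open>w = 1/z\<close> at infinity the map is \<open>w \<mapsto> q(1/w)/p(1/w)\<close>; a fixed point at \<open>0\<close>
  with multiplier of modulus \<open>> 1\<close> forces \<open>deg p = deg q + 1\<close> and a multiplier
  \<open>lc q / lc p \<noteq> 1\<close>. Hence the fixed-point polynomial \<open>p - z q\<close> has degree \<open>deg q + 1\<close>:
  in the plane \<open>g\<close> has \<open>deg q\<close> poles and \<open>deg q + 1\<close> fixed points.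

  Each curve passes through \<open>\<infinity>\<close>, so after an inversion about a point off the curve the planar
  Jordan curve theorem shows that the finite parts of its interior and exterior are complementary
  open sets with the finite part of the curve as common boundary. Thus the finite part of
  \<open>closure (Ext \<gamma>\<^sub>k)\<close> is the complement of \<open>Int \<gamma>\<^sub>k\<close>, and, since distinct curves meet
  only finitely often, the finite part of \<open>closure A\<close> is the complement of the union of the
  interiors. So hypothesis 3 says that every \<open>Int \<gamma>\<^sub>k\<close> contains exactly one more fixed point
  than poles. All fixed points lie in the disjoint interiors, so \<open>deg q + 1 = n + P\<close> where \<open>P\<close>
  counts the poles in the interiors, and the remaining \<open>deg q - P = n - 1\<close> poles lie in
  \<open>closure A\<close>.
\<close>

section \<open>The multiplier at infinity\<close>

lemma tendsto_power_mult_eq: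
  fixes f h :: "'a::real_normed_field \<Rightarrow> 'a"
  assumes f: "(f \<longlongrightarrow> L) (at 0)" and h: "(h \<longlongrightarrow> c) (at 0)" and "L \<noteq> 0" "c \<noteq> 0"
    and eq: "eventually (\<lambda>w. f w * w ^ m = w ^ n * h w) (at 0)"
  shows "m = n \<and> L = c"
proof -
  have nz: "eventually (\<lambda>w. w \<noteq> 0) (at (0::'a))"
    by (simp add: eventually_at_filter)
  show ?thesis
  proof (cases "m \<le> n")
    case True
    have "eventually (\<lambda>w. f w = w ^ (n - m) * h w) (at 0)"
      using eq nz
    proof eventually_elim
      case (elim w)
      have "w ^ n = w ^ (n - m) * w ^ m"
        using True by (simp flip: power_add)
      with elim show ?case by (simp add: mult_ac)
    qed
    with f have "((\<lambda>w. w ^ (n - m) * h w) \<longlongrightarrow> L) (at 0)"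
      by (rule Lim_transform_eventually)
    moreover have "((\<lambda>w. w ^ (n - m) * h w) \<longlongrightarrow> 0 ^ (n - m) * c) (at 0)"
      by (intro tendsto_intros h)
    ultimately have "L = 0 ^ (n - m) * c"
      by (rule tendsto_unique[rotated]) simp
    with \<open>L \<noteq> 0\<close> True show ?thesis
      by (cases "n - m") auto
  next
    case False
    have "eventually (\<lambda>w. f w * w ^ (m - n) = h w) (at 0)"
      using eq nz
    proof eventually_elim
      case (elim w)
      have "w ^ m = w ^ (m - n) * w ^ n"
        using False by (simp flip: power_add)
      with elim show ?case by (simp add: mult_ac)
    qed
    with tendsto_mult[OF f tendsto_power[OF tendsto_ident_at, of "m - n"]]
    have "(h \<longlongrightarrow> L * 0 ^ (m - n)) (at 0)"
      by (rule Lim_transform_eventually)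
    hence "c = L * 0 ^ (m - n)"
      using tendsto_unique[OF _ h] by simp
    with \<open>c \<noteq> 0\<close> False show ?thesis
      by simp
  qed
qed

lemma repelling_fixed_at_infinity_multiplier:
  assumes "repelling_fixed_at_infinity p q"
  obtains L where "((\<lambda>w. inverse (rat_fun p q (inverse w)) / w) \<longlongrightarrow> L) (at 0)" "1 < cmod L"
proof -
  obtain r G where "r > 0" and G: "G holomorphic_on ball 0 r" "G 0 = 0"
    and G_eq: "\<forall>w\<in>ball 0 r - {0}. G w = inverse (rat_fun p q (inverse w))"
    and L: "1 < cmod (deriv G 0)"
    using assms unfolding repelling_fixed_at_infinity_def by blast
  have "(G has_field_derivative deriv G 0) (at 0)"
    using G \<open>r > 0\<close> by (intro holomorphic_derivI[where S = "ball 0 r"]) auto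
  hence "((\<lambda>w. G w / w) \<longlongrightarrow> deriv G 0) (at 0)"
    using G by (simp add: has_field_derivative_iff)
  moreover have "eventually (\<lambda>w. w \<in> ball 0 r - {0}) (at (0::complex))"
    using \<open>r > 0\<close> by (intro eventually_at_in_open) auto
  hence "eventually (\<lambda>w. G w / w = inverse (rat_fun p q (inverse w)) / w) (at 0)"
    by eventually_elim (use G_eq in auto)
  ultimately show ?thesis
    using L by (intro that) (rule Lim_transform_eventually)
qed

lemma repelling_fixed_at_infinity_degree:
  assumes "q \<noteq> 0" and "repelling_fixed_at_infinity p q"
  shows "degree p = Suc (degree q)" and "lead_coeff p \<noteq> lead_coeff q"
proof -
  obtain L where lim: "((\<lambda>w. inverse (rat_fun p q (inverse w)) / w) \<longlongrightarrow> L) (at 0)"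
    and L: "1 < cmod L"
    using repelling_fixed_at_infinity_multiplier[OF assms(2)] .
  have "p \<noteq> 0"
  proof
    assume "p = 0"
    with lim have "((\<lambda>w. 0) \<longlongrightarrow> L) (at (0::complex))"
      by (simp add: rat_fun_def)
    hence "0 = L"
      by (rule LIM_const_eq)
    with L show False
      by simp
  qed
  define h where "h w = poly (reflect_poly q) w / poly (reflect_poly p) w" for w
  have "isCont h 0"
    unfolding h_def using \<open>p \<noteq> 0\<close> by (intro continuous_intros) (simp add: poly_reflect_poly_0)
  hence h: "(h \<longlongrightarrow> lead_coeff q / lead_coeff p) (at 0)"
    by (simp add: isCont_def h_def poly_reflect_poly_0)
  have "((\<lambda>w. poly (reflect_poly p) w) \<longlongrightarrow> poly (reflect_poly p) 0) (at 0)"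
    by (intro tendsto_intros)
  hence "eventually (\<lambda>w. poly (reflect_poly p) w \<noteq> 0) (at 0)"
    using \<open>p \<noteq> 0\<close> by (intro tendsto_imp_eventually_ne) (auto simp: poly_reflect_poly_0)
  moreover have "eventually (\<lambda>w. w \<noteq> 0) (at (0::complex))"
    by (simp add: eventually_at_filter)
  \<comment> \<open>\<open>q(1/w) / p(1/w) = w\<^bsup>deg p - deg q\<^esup> h(w)\<close>, written without negative exponents\<close>
  ultimately have expand: "eventually (\<lambda>w. inverse (rat_fun p q (inverse w)) / w * w ^ Suc (degree q)
      = w ^ degree p * h w) (at 0)"
  proof eventually_elim
    case (elim w)
    hence "poly p (inverse w) \<noteq> 0"
      by (simp add: poly_reflect_poly_nz)
    hence "w ^ degree p * h w = poly q (inverse w) / poly p (inverse w) * w ^ degree q"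
      using elim by (simp add: h_def poly_reflect_poly_nz)
    thus ?case
      using elim by (simp add: rat_fun_def)
  qed
  have "L \<noteq> 0"
    using L by auto
  hence "Suc (degree q) = degree p" and "L = lead_coeff q / lead_coeff p"
    using tendsto_power_mult_eq[OF lim h _ _ expand] \<open>p \<noteq> 0\<close> \<open>q \<noteq> 0\<close> by simp_all
  thus "degree p = Suc (degree q)" by simp
  show "lead_coeff p \<noteq> lead_coeff q"
    using L \<open>L = lead_coeff q / lead_coeff p\<close> \<open>p \<noteq> 0\<close> by (auto split: if_splits)
qed

lemma degree_fixpoint_poly:
  assumes "q \<noteq> 0" and "repelling_fixed_at_infinity p q"
  shows "degree (p - [:0, 1:] * q) = Suc (degree q)"
proof -
  have p: "degree p = Suc (degree q)" "lead_coeff p \<noteq> lead_coeff q"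
    using repelling_fixed_at_infinity_degree[OF assms] by auto
  have Xq: "[:0, 1:] * q = pCons 0 q" by simp
  have "coeff (p - [:0, 1:] * q) (Suc (degree q)) \<noteq> 0"
    using p by (simp add: Xq)
  moreover have "degree (p - [:0, 1:] * q) \<le> Suc (degree q)"
    unfolding Xq using p assms(1) by (intro degree_diff_le) (auto simp: degree_pCons_eq)
  ultimately show ?thesis
    using le_degree le_antisym by metis
qed

lemma fixpoint_poly_root_imp_fixpoint:
  assumes "coprime p q" and "poly (p - [:0, 1:] * q) z = 0"
  shows "poly q z \<noteq> 0" and "rat_fun p q z = z"
proof -
  have pz: "poly p z = z * poly q z"
    using assms(2) by simp
  show "poly q z \<noteq> 0"
    using coprime_poly_0[OF assms(1), of z] pz by auto
  thus "rat_fun p q z = z"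
    using pz by (simp add: rat_fun_def)
qed

section \<open>Counting roots in a region\<close>

definition root_count :: "complex poly \<Rightarrow> complex set \<Rightarrow> nat" where
  "root_count r S = (\<Sum>z\<in>{z\<in>S. poly r z = 0}. order z r)"

lemma pole_count_eq_root_count: "pole_count p q S = root_count q S"
  by (simp add: pole_count_def root_count_def)

lemma fixpt_count_eq_root_count: "fixpt_count p q S = root_count (p - [:0, 1:] * q) S"
  by (simp add: fixpt_count_def root_count_def)

lemma root_count_UNIV:
  assumes "r \<noteq> 0"
  shows "root_count r UNIV = degree r"
proof -
  have "degree r = size (proots r)"
    by (simp add: size_proots_complex)
  also have "\<dots> = (\<Sum>z\<in>set_mset (proots r). count (proots r) z)"
    by (rule size_multiset_overloaded_eq)
  also have "\<dots> = root_count r UNIV"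
    using assms unfolding root_count_def by (intro sum.cong) (auto simp: count_proots)
  finally show ?thesis ..
qed

lemma root_count_superset:
  assumes "r \<noteq> 0" and "{z. poly r z = 0} \<subseteq> S"
  shows "root_count r S = degree r"
proof -
  have "{z\<in>S. poly r z = 0} = {z\<in>UNIV. poly r z = 0}"
    using assms by auto
  thus ?thesis
    using root_count_UNIV[OF assms(1)] by (simp add: root_count_def)
qed

lemma root_count_UN:
  assumes "r \<noteq> 0" and "finite K"
    and "\<And>i j. i \<in> K \<Longrightarrow> j \<in> K \<Longrightarrow> i \<noteq> j \<Longrightarrow> A i \<inter> A j = {}"
  shows "root_count r (\<Union>k\<in>K. A k) = (\<Sum>k\<in>K. root_count r (A k))"
proof -
  have fin: "finite {z. poly r z = 0}"
    using assms(1) by (simp add: poly_roots_finite)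
  have "{z\<in>(\<Union>k\<in>K. A k). poly r z = 0} = (\<Union>k\<in>K. {z\<in>A k. poly r z = 0})"
    by auto
  thus ?thesis
    unfolding root_count_def
    by (simp only:) (rule sum.UNION_disjoint; use assms fin in \<open>auto intro: finite_subset\<close>)
qed

lemma root_count_Compl:
  assumes "r \<noteq> 0"
  shows "root_count r S + root_count r (- S) = degree r"
proof -
  have "root_count r (\<Union>b\<in>{True, False}. if b then S else - S) = degree r"
    using assms by (intro root_count_superset) auto
  thus ?thesis
    using root_count_UN[OF assms, of "{True, False}" "\<lambda>b. if b then S else - S"] by auto
qed

lemma root_count_Compl_Union:
  fixes q r :: "complex poly" and I :: "'k \<Rightarrow> complex set"
  assumes "q \<noteq> 0" and "r \<noteq> 0" and "degree r = Suc (degree q)" and "finite K"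
    and disj: "\<And>i j. i \<in> K \<Longrightarrow> j \<in> K \<Longrightarrow> i \<noteq> j \<Longrightarrow> I i \<inter> I j = {}"
    and roots: "{z. poly r z = 0} \<subseteq> (\<Union>k\<in>K. I k)"
    and balanced: "\<And>k. k \<in> K \<Longrightarrow> root_count q (- I k) = root_count r (- I k)"
  shows "root_count q (- (\<Union>k\<in>K. I k)) = card K - 1"
proof -
  have "root_count r (I k) = Suc (root_count q (I k))" if "k \<in> K" for k
    using root_count_Compl[OF \<open>q \<noteq> 0\<close>, of "I k"] root_count_Compl[OF \<open>r \<noteq> 0\<close>, of "I k"]
      balanced[OF that] \<open>degree r = Suc (degree q)\<close> by linarith
  hence "Suc (degree q) = (\<Sum>k\<in>K. Suc (root_count q (I k)))"
    using root_count_superset[OF \<open>r \<noteq> 0\<close> roots] root_count_UN[of r K I, OF \<open>r \<noteq> 0\<close> \<open>finite K\<close> disj]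
      \<open>degree r = Suc (degree q)\<close> by simp
  also have "\<dots> = card K + root_count q (\<Union>k\<in>K. I k)"
    using root_count_UN[of q K I, OF \<open>q \<noteq> 0\<close> \<open>finite K\<close> disj] by (simp add: sum_Suc)
  finally show ?thesis
    using root_count_Compl[OF \<open>q \<noteq> 0\<close>, of "\<Union>k\<in>K. I k"] by linarith
qed

section \<open>Jordan separations of the plane\<close>

definition jordan_separation :: "complex set \<Rightarrow> complex set \<Rightarrow> complex set \<Rightarrow> bool" where
  "jordan_separation G I E \<longleftrightarrow>
     open I \<and> open E \<and> I \<inter> E = {} \<and> I \<union> E = - G \<and> G \<subseteq> closure I \<and> G \<subseteq> closure E"

lemma jordan_separation_commute: "jordan_separation G I E \<longleftrightarrow> jordan_separation G E I"
  by (auto simp: jordan_separation_def)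

lemma jordan_separation_closure:
  assumes "jordan_separation G I E"
  shows "closure E = - I"
proof
  show "closure E \<subseteq> - I"
    using assms by (intro closure_minimal) (auto simp: jordan_separation_def)
  show "- I \<subseteq> closure E"
    using assms closure_subset unfolding jordan_separation_def by blast
qed

lemma jordan_separation_closed:
  assumes "jordan_separation G I E"
  shows "closed G"
proof -
  have "open (- G)"
    using assms by (metis jordan_separation_def open_Un)
  thus ?thesis
    by (simp add: closed_def)
qed

lemma jordan_separation_connected_cases:
  assumes "jordan_separation G I E" and "connected D" and "D \<inter> G = {}"
  shows "D \<subseteq> I \<or> D \<subseteq> E"
proof -
  have "D \<subseteq> I \<union> E" and "I \<inter> E \<inter> D = {}"
    using assms by (auto simp: jordan_separation_def)
  thus ?thesis
    using connectedD[OF \<open>connected D\<close>, of I E] assms(1) by (auto simp: jordan_separation_def)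
qed

lemma jordan_separation_ball_meets:
  assumes "jordan_separation G I E" and "w \<in> G" and "e > 0"
  shows "ball w e \<inter> I \<noteq> {}" and "ball w e \<inter> E \<noteq> {}"
proof -
  have "w \<in> closure I" "w \<in> closure E"
    using assms(1,2) by (auto simp: jordan_separation_def)
  thus "ball w e \<inter> I \<noteq> {}" "ball w e \<inter> E \<noteq> {}"
    using \<open>e > 0\<close> by (metis closure_approachable dist_commute disjoint_iff mem_ball)+
qed

lemma jordan_separation_islimpt:
  assumes sep: "jordan_separation G I E" and "w \<in> G"
  shows "w islimpt G"
proof (rule ccontr)
  assume "\<not> w islimpt G"
  then obtain d where "d > 0" and d: "\<And>v. v \<in> G \<Longrightarrow> v \<noteq> w \<Longrightarrow> d \<le> dist v w"
    unfolding islimpt_approachable by (auto simp: not_less)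
  define D where "D = ball w d - {w}"
  have "connected D"
    unfolding D_def by (rule connected_punctured_ball) simp
  moreover have "D \<inter> G = {}"
    using d by (auto simp: D_def dist_commute) (metis not_le)
  ultimately have "D \<subseteq> I \<or> D \<subseteq> E"
    by (rule jordan_separation_connected_cases[OF sep])
  moreover have "w \<notin> I" "w \<notin> E"
    using sep \<open>w \<in> G\<close> by (auto simp: jordan_separation_def)
  hence "D \<inter> I \<noteq> {}" and "D \<inter> E \<noteq> {}"
    using jordan_separation_ball_meets[OF sep \<open>w \<in> G\<close> \<open>d > 0\<close>] by (auto simp: D_def)
  moreover have "I \<inter> E = {}"
    using sep by (simp add: jordan_separation_def)
  ultimately show False
    by blast
qed

text \<open>
  Points \<open>v\<close> of \<open>G k\<close> lying on no other curve accumulate at \<open>z\<close>. A small disc around such a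
  \<open>v\<close> misses the other curves and meets \<open>I k\<close>, hence lies in every other exterior; so its
  points in \<open>E k\<close> lie in all exteriors.
\<close>

lemma jordan_curve_point_in_closure_Inter_exteriors:
  assumes "finite K" and "k \<in> K" and "z \<in> G k"
    and sep: "\<And>k. k \<in> K \<Longrightarrow> jordan_separation (G k) (I k) (E k)"
    and disj: "\<And>i j. i \<in> K \<Longrightarrow> j \<in> K \<Longrightarrow> i \<noteq> j \<Longrightarrow> I i \<inter> I j = {}"
    and fin: "\<And>i j. i \<in> K \<Longrightarrow> j \<in> K \<Longrightarrow> i \<noteq> j \<Longrightarrow> finite (G i \<inter> G j)"
  shows "z \<in> closure (\<Inter>k\<in>K. E k)"
  unfolding closure_approachable
proof (intro allI impI)
  fix e :: real
  assume "e > 0"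
  define F where "F = (\<Union>j\<in>K - {k}. G j)"
  have "closed F"
    unfolding F_def using \<open>finite K\<close> sep by (intro closed_UN) (auto intro: jordan_separation_closed)
  have "finite (\<Union>j\<in>K - {k}. G k \<inter> G j)"
    using \<open>finite K\<close> fin \<open>k \<in> K\<close> by (intro finite_UN_I) auto
  moreover have "G k \<inter> F = (\<Union>j\<in>K - {k}. G k \<inter> G j)"
    unfolding F_def by blast
  ultimately have "finite (G k \<inter> F)"
    by (simp only:)
  moreover have "z islimpt (G k \<inter> F) \<union> (G k - F)"
    using jordan_separation_islimpt[OF sep[OF \<open>k \<in> K\<close>] \<open>z \<in> G k\<close>] by (simp add: Int_Diff_Un)
  ultimately have "z islimpt G k - F"
    using islimpt_Un_finite by blast
  then obtain v where v: "v \<in> G k" "v \<notin> F" "dist v z < e / 2"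
    using \<open>e > 0\<close> unfolding islimpt_approachable by (meson Diff_iff half_gt_zero)
  obtain d where "d > 0" and "ball v d \<subseteq> - F"
    using \<open>closed F\<close> v(2) open_contains_ball_eq[of "- F"] by (auto simp: closed_def)
  define D where "D = ball v (min d (e / 2))"
  have "min d (e / 2) > 0"
    using \<open>d > 0\<close> \<open>e > 0\<close> by simp
  note meets = jordan_separation_ball_meets[OF sep[OF \<open>k \<in> K\<close>] v(1) this, folded D_def]
  have "D \<subseteq> E j" if "j \<in> K" "j \<noteq> k" for j
  proof -
    have "D \<inter> G j = {}"
      using \<open>ball v d \<subseteq> - F\<close> that by (auto simp: D_def F_def)
    hence "D \<subseteq> I j \<or> D \<subseteq> E j"
      by (intro jordan_separation_connected_cases[OF sep[OF \<open>j \<in> K\<close>]]) (simp_all add: D_def)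
    thus ?thesis
      using meets(1) disj[OF that(1) \<open>k \<in> K\<close> that(2)] by blast
  qed
  moreover obtain u where "u \<in> E k" "u \<in> D"
    using meets(2) by blast
  ultimately have "u \<in> (\<Inter>k\<in>K. E k)"
    by blast
  moreover have "dist u z < e"
    using \<open>u \<in> D\<close> v(3) dist_triangle[of u z v] by (simp add: D_def dist_commute)
  ultimately show "\<exists>y\<in>\<Inter>k\<in>K. E k. dist y z < e"
    by blast
qed

lemma closure_Inter_jordan_exteriors:
  assumes "finite K"
    and sep: "\<And>k. k \<in> K \<Longrightarrow> jordan_separation (G k) (I k) (E k)"
    and "\<And>i j. i \<in> K \<Longrightarrow> j \<in> K \<Longrightarrow> i \<noteq> j \<Longrightarrow> I i \<inter> I j = {}"
    and "\<And>i j. i \<in> K \<Longrightarrow> j \<in> K \<Longrightarrow> i \<noteq> j \<Longrightarrow> finite (G i \<inter> G j)"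
  shows "closure (\<Inter>k\<in>K. E k) = - (\<Union>k\<in>K. I k)"
proof
  have "closure (\<Inter>k\<in>K. E k) \<subseteq> closure (E k)" if "k \<in> K" for k
    using that by (intro closure_mono) auto
  thus "closure (\<Inter>k\<in>K. E k) \<subseteq> - (\<Union>k\<in>K. I k)"
    using jordan_separation_closure[OF sep] by blast
next
  show "- (\<Union>k\<in>K. I k) \<subseteq> closure (\<Inter>k\<in>K. E k)"
  proof
    fix z
    assume z: "z \<in> - (\<Union>k\<in>K. I k)"
    show "z \<in> closure (\<Inter>k\<in>K. E k)"
    proof (cases "\<exists>k\<in>K. z \<in> G k")
      case True
      then obtain k where "k \<in> K" "z \<in> G k"
        by blast
      thus ?thesis
        by (rule jordan_curve_point_in_closure_Inter_exteriors[OF \<open>finite K\<close> _ _ assms(2-4)])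
    next
      case False
      have "z \<in> E k" if "k \<in> K" for k
        using False z sep[OF that] that unfolding jordan_separation_def by blast
      hence "z \<in> (\<Inter>k\<in>K. E k)"
        by blast
      thus ?thesis
        using closure_subset by blast
    qed
  qed
qed

section \<open>The Riemann sphere and the inversion chart\<close>

lemma openin_riemann_sphere: "openin riemann_sphere = riemann_sphere_open"
  by (simp add: riemann_sphere_def topology_inverse' istopology_riemann_sphere_open)

lemma topspace_riemann_sphere [simp]: "topspace riemann_sphere = UNIV"
proof -
  have "riemann_sphere_open UNIV"
    by (simp add: riemann_sphere_open_def)
  thus ?thesis
    unfolding topspace_def openin_riemann_sphere by blast
qed

lemma finite_part_Some_image [simp]: "finite_part (Some ` V) = V"
  by (auto simp: finite_part_def)

lemma openin_riemann_sphere_Some_image: "openin riemann_sphere (Some ` V) \<longleftrightarrow> open V"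
  by (simp add: openin_riemann_sphere riemann_sphere_open_def inj_image_mem_iff)

lemma continuous_map_Some: "continuous_map euclidean riemann_sphere Some"
  unfolding continuous_map_def openin_riemann_sphere riemann_sphere_open_def by auto

lemma finite_part_closure_of:
  "finite_part (riemann_sphere closure_of X) = closure (finite_part X)"
proof (rule set_eqI)
  fix z
  have "z \<in> finite_part (riemann_sphere closure_of X) \<longleftrightarrow>
      (\<forall>T. Some z \<in> T \<and> riemann_sphere_open T \<longrightarrow> (\<exists>y. y \<in> X \<and> y \<in> T))"
    by (simp add: finite_part_def in_closure_of openin_riemann_sphere)
  also have "\<dots> \<longleftrightarrow> (\<forall>V. z \<in> V \<and> open V \<longrightarrow> (\<exists>y\<in>finite_part X. y \<in> V))"
  proof
    assume H: "\<forall>T. Some z \<in> T \<and> riemann_sphere_open T \<longrightarrow> (\<exists>y. y \<in> X \<and> y \<in> T)"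
    show "\<forall>V. z \<in> V \<and> open V \<longrightarrow> (\<exists>y\<in>finite_part X. y \<in> V)"
    proof (intro allI impI)
      fix V
      assume "z \<in> V \<and> open V"
      with H obtain y where "y \<in> X" "y \<in> Some ` V"
        using openin_riemann_sphere_Some_image[of V] by (auto simp: openin_riemann_sphere)
      thus "\<exists>y\<in>finite_part X. y \<in> V"
        by (auto simp: finite_part_def)
    qed
  next
    assume H: "\<forall>V. z \<in> V \<and> open V \<longrightarrow> (\<exists>y\<in>finite_part X. y \<in> V)"
    show "\<forall>T. Some z \<in> T \<and> riemann_sphere_open T \<longrightarrow> (\<exists>y. y \<in> X \<and> y \<in> T)"
    proof (intro allI impI)
      fix T
      assume "Some z \<in> T \<and> riemann_sphere_open T"
      hence "open (finite_part T)" "z \<in> finite_part T"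
        by (auto simp: riemann_sphere_open_def finite_part_def)
      with H obtain y where "y \<in> finite_part X" "y \<in> finite_part T"
        by blast
      thus "\<exists>y. y \<in> X \<and> y \<in> T"
        by (auto simp: finite_part_def)
    qed
  qed
  also have "\<dots> \<longleftrightarrow> z \<in> closure (finite_part X)"
    by (auto simp: closure_iff_nhds_not_empty)
  finally show "z \<in> finite_part (riemann_sphere closure_of X) \<longleftrightarrow> z \<in> closure (finite_part X)" .
qed

lemma connected_components_of_two_open_connected:
  assumes "openin X U1" "openin X U2" "connectedin X U1" "connectedin X U2"
    and "U1 \<inter> U2 = {}" "U1 \<union> U2 = T"
    and C: "C \<in> connected_components_of (subtopology X T)"
  shows "C = U1 \<or> C = U2"
proof -
  have "C \<noteq> {}"
    using C nonempty_connected_components_of by blast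
  have "connectedin (subtopology X T) C"
    using C connectedin_connected_components_of by blast
  hence "connectedin X C" "C \<subseteq> T"
    by (simp_all add: connectedin_subtopology)
  hence "U1 \<inter> C = {} \<or> U2 \<inter> C = {}"
    using assms(1,2,5,6) unfolding connectedin by blast
  hence "C \<subseteq> U1 \<and> \<not> disjnt C U1 \<or> C \<subseteq> U2 \<and> \<not> disjnt C U2"
    using \<open>C \<subseteq> T\<close> \<open>C \<noteq> {}\<close> assms(6) by (auto simp: disjnt_def)
  moreover have "connectedin (subtopology X T) U1" "connectedin (subtopology X T) U2"
    using assms(3,4,6) by (auto simp: connectedin_subtopology)
  ultimately show ?thesis
    using connected_components_of_maximal[OF C] by blast
qed

definition inversion_chart :: "complex \<Rightarrow> complex option \<Rightarrow> complex" where
  "inversion_chart a x = (case x of None \<Rightarrow> 0 | Some z \<Rightarrow> 1 / (z - a))"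

definition inversion_vimage :: "complex \<Rightarrow> complex set \<Rightarrow> complex set" where
  "inversion_vimage a X = {z. z \<noteq> a \<and> 1 / (z - a) \<in> X}"

lemma inversion_vimage_eq_image:
  assumes "0 \<notin> X"
  shows "inversion_vimage a X = (\<lambda>w. a + 1 / w) ` X"
proof (intro set_eqI iffI)
  fix z
  assume "z \<in> inversion_vimage a X"
  hence "1 / (z - a) \<in> X" and "z = a + 1 / (1 / (z - a))"
    by (auto simp: inversion_vimage_def)
  thus "z \<in> (\<lambda>w. a + 1 / w) ` X"
    by (rule rev_image_eqI)
next
  fix z
  assume "z \<in> (\<lambda>w. a + 1 / w) ` X"
  thus "z \<in> inversion_vimage a X"
    using assms by (auto simp: inversion_vimage_def)
qed

lemma open_inversion_vimage:
  assumes "open X"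
  shows "open (inversion_vimage a X)"
proof -
  have "continuous_on (- {a}) (\<lambda>z. 1 / (z - a))"
    by (intro continuous_intros) auto
  hence "open (- {a} \<inter> (\<lambda>z. 1 / (z - a)) -` X)"
    using assms by (intro continuous_open_preimage) auto
  moreover have "- {a} \<inter> (\<lambda>z. 1 / (z - a)) -` X = inversion_vimage a X"
    by (auto simp: inversion_vimage_def)
  ultimately show ?thesis
    by simp
qed

lemma inversion_vimage_ball:
  assumes "- X \<subseteq> cball 0 R" and "R > 0"
  shows "ball a (1 / R) - {a} \<subseteq> inversion_vimage a X"
proof
  fix z
  assume "z \<in> ball a (1 / R) - {a}"
  hence "z \<noteq> a" and "dist z a < 1 / R"
    by (simp_all add: dist_commute[of z a])
  hence "0 < norm (z - a)" and "norm (z - a) * R < 1"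
    using \<open>R > 0\<close> by (simp_all add: dist_norm pos_less_divide_eq)
  hence "R < 1 / norm (z - a)"
    by (metis mult.commute pos_less_divide_eq)
  hence "1 / (z - a) \<notin> cball 0 R"
    by (simp add: norm_divide)
  hence "1 / (z - a) \<in> X"
    using assms(1) by blast
  thus "z \<in> inversion_vimage a X"
    using \<open>z \<noteq> a\<close> by (simp add: inversion_vimage_def)
qed

lemma open_insert_inversion_vimage:
  assumes "open X" and "bounded (- X)"
  shows "open (insert a (inversion_vimage a X))"
proof -
  obtain R where "R > 0" and "\<forall>x\<in>- X. norm x \<le> R"
    using assms(2) unfolding bounded_pos by blast
  hence "- X \<subseteq> cball 0 R"
    by auto
  hence "ball a (1 / R) - {a} \<subseteq> inversion_vimage a X"
    using \<open>R > 0\<close> by (rule inversion_vimage_ball)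
  moreover have "a \<in> ball a (1 / R)"
    using \<open>R > 0\<close> by simp
  ultimately have "insert a (inversion_vimage a X) = inversion_vimage a X \<union> ball a (1 / R)"
    by blast
  thus ?thesis
    by (simp add: open_Un open_inversion_vimage assms(1))
qed

lemma connected_inversion_vimage:
  assumes "connected X" and "0 \<notin> X"
  shows "connected (inversion_vimage a X)"
proof -
  have "continuous_on X (\<lambda>w. a + 1 / w)"
    using assms(2) by (intro continuous_intros) auto
  thus ?thesis
    unfolding inversion_vimage_eq_image[OF assms(2)] using assms(1) by (rule connected_continuous_image)
qed

lemma connected_insert_inversion_vimage:
  assumes "connected X" and "0 \<notin> X" and "bounded (- X)"
  shows "connected (insert a (inversion_vimage a X))"
proof (rule connected_intermediate_closure)
  show "connected (inversion_vimage a X)"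
    using assms(1,2) by (rule connected_inversion_vimage)
  obtain R where "R > 0" and "\<forall>x\<in>- X. norm x \<le> R"
    using assms(3) unfolding bounded_pos by blast
  hence "- X \<subseteq> cball 0 R"
    by auto
  have "a \<in> closure (inversion_vimage a X)"
    unfolding closure_approachable
  proof (intro allI impI)
    fix e :: real
    assume "e > 0"
    obtain t where t: "0 < t" "t < 1 / R" "t < e"
      using field_lbound_gt_zero[of "1 / R" e] \<open>R > 0\<close> \<open>e > 0\<close> by auto
    have "dist (a + of_real t) a = t"
      using t by (simp add: dist_norm)
    hence mem: "a + of_real t \<in> ball a (1 / R) - {a}" and close: "dist (a + of_real t) a < e"
      using t by (auto simp: dist_commute[of a])
    have "a + of_real t \<in> inversion_vimage a X"
      using inversion_vimage_ball[OF \<open>- X \<subseteq> cball 0 R\<close> \<open>R > 0\<close>] mem by (rule subsetD)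
    with close show "\<exists>z\<in>inversion_vimage a X. dist z a < e"
      by (rule bexI)
  qed
  thus "insert a (inversion_vimage a X) \<subseteq> closure (inversion_vimage a X)"
    using closure_subset by blast
qed auto

lemma closure_inversion_vimage:
  assumes "0 \<notin> X" and "z \<noteq> a" and "1 / (z - a) \<in> closure X"
  shows "z \<in> closure (inversion_vimage a X)"
proof -
  obtain s where s: "\<And>n. s n \<in> X" "s \<longlonglongrightarrow> 1 / (z - a)"
    using assms(3) closure_sequential by blast
  have "(\<lambda>n. a + 1 / s n) \<longlonglongrightarrow> a + 1 / (1 / (z - a))"
    using assms(2) by (intro tendsto_intros s(2)) auto
  hence "(\<lambda>n. a + 1 / s n) \<longlonglongrightarrow> z"
    by simp
  moreover have "a + 1 / s n \<in> inversion_vimage a X" for n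
    using s(1)[of n] assms(1) inversion_vimage_eq_image[OF assms(1)] by blast
  ultimately show ?thesis
    unfolding closure_sequential by (intro exI[of _ "\<lambda>n. a + 1 / s n"]) blast
qed

lemma jordan_separation_inversion_vimage:
  fixes c :: "real \<Rightarrow> complex"
  assumes "simple_path c" and "pathfinish c = pathstart c" and "0 \<in> path_image c"
  defines "S \<equiv> path_image c"
  shows "jordan_separation (inversion_vimage a S)
           (inversion_vimage a (inside S)) (insert a (inversion_vimage a (outside S)))"
    and "connected (inversion_vimage a (inside S))"
    and "connected (insert a (inversion_vimage a (outside S)))"
proof -
  have J: "open (inside S)" "connected (inside S)" "open (outside S)" "connected (outside S)"
    "inside S \<inter> outside S = {}" "inside S \<union> outside S = - S"
    "frontier (inside S) = S" "frontier (outside S) = S"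
    using Jordan_inside_outside[OF assms(1,2)] unfolding S_def by auto
  have "0 \<in> S"
    using assms(3) by (simp add: S_def)
  hence "0 \<notin> inside S" "0 \<notin> outside S"
    using J(6) by blast+
  have "bounded (- outside S)"
    unfolding S_def by (intro cobounded_outside bounded_simple_path_image assms(1))
  show "connected (inversion_vimage a (inside S))"
    using J(2) \<open>0 \<notin> inside S\<close> by (rule connected_inversion_vimage)
  show "connected (insert a (inversion_vimage a (outside S)))"
    using J(4) \<open>0 \<notin> outside S\<close> \<open>bounded (- outside S)\<close> by (rule connected_insert_inversion_vimage)
  have closure_in: "inversion_vimage a S \<subseteq> closure (inversion_vimage a U)"
    if "U \<in> {inside S, outside S}" for U
  proof
    fix z
    assume "z \<in> inversion_vimage a S"
    hence "z \<noteq> a" and "1 / (z - a) \<in> frontier U"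
      using J(7,8) that by (auto simp: inversion_vimage_def)
    moreover have "0 \<notin> U"
      using that \<open>0 \<notin> inside S\<close> \<open>0 \<notin> outside S\<close> by auto
    ultimately show "z \<in> closure (inversion_vimage a U)"
      by (intro closure_inversion_vimage) (auto simp: frontier_def)
  qed
  show "jordan_separation (inversion_vimage a S)
      (inversion_vimage a (inside S)) (insert a (inversion_vimage a (outside S)))"
    unfolding jordan_separation_def
  proof (intro conjI)
    show "open (inversion_vimage a (inside S))"
      using J(1) by (rule open_inversion_vimage)
    show "open (insert a (inversion_vimage a (outside S)))"
      using J(3) \<open>bounded (- outside S)\<close> by (rule open_insert_inversion_vimage)
    show "inversion_vimage a (inside S) \<inter> insert a (inversion_vimage a (outside S)) = {}"
      using J(5) unfolding inversion_vimage_def by blast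
    show "inversion_vimage a (inside S) \<union> insert a (inversion_vimage a (outside S))
        = - inversion_vimage a S"
      using J(6) unfolding inversion_vimage_def by blast
    show "inversion_vimage a S \<subseteq> closure (inversion_vimage a (inside S))"
      using closure_in by blast
    have "closure (inversion_vimage a (outside S))
        \<subseteq> closure (insert a (inversion_vimage a (outside S)))"
      by (intro closure_mono) blast
    thus "inversion_vimage a S \<subseteq> closure (insert a (inversion_vimage a (outside S)))"
      using closure_in by blast
  qed
qed

lemma Compl_inversion_vimage_subset_cball:
  assumes "ball 0 e \<subseteq> U" and "e > 0"
  shows "- inversion_vimage a U \<subseteq> cball a (1 / e)"
proof
  fix z
  assume z: "z \<in> - inversion_vimage a U"
  show "z \<in> cball a (1 / e)"
  proof (cases "z = a")
    case False
    hence "1 / (z - a) \<notin> ball 0 e"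
      using z assms(1) by (auto simp: inversion_vimage_def)
    hence "e \<le> 1 / norm (z - a)"
      by (simp add: norm_divide)
    hence "norm (z - a) \<le> 1 / e"
      using False \<open>e > 0\<close> by (simp add: le_divide_eq mult.commute)
    thus ?thesis
      by (simp add: dist_norm norm_minus_commute)
  qed (use \<open>e > 0\<close> in simp)
qed

lemma continuous_map_inversion_chart:
  "continuous_map (subtopology riemann_sphere (- {Some a})) euclidean (inversion_chart a)"
  unfolding continuous_map_def
proof (intro conjI allI impI)
  show "inversion_chart a \<in> topspace (subtopology riemann_sphere (- {Some a})) \<rightarrow> topspace euclidean"
    by simp
  fix U :: "complex set"
  assume "openin euclidean U"
  hence "open U"
    by simp
  define T where "T = {x. x \<noteq> Some a \<and> inversion_chart a x \<in> U}"
  have fin: "{z. Some z \<in> T} = inversion_vimage a U"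
    by (auto simp: T_def inversion_chart_def inversion_vimage_def)
  have "riemann_sphere_open T"
    unfolding riemann_sphere_open_def fin
  proof (intro conjI impI)
    show "open (inversion_vimage a U)"
      using \<open>open U\<close> by (rule open_inversion_vimage)
    assume "None \<in> T"
    hence "0 \<in> U"
      by (simp add: T_def inversion_chart_def)
    then obtain e where "e > 0" "ball 0 e \<subseteq> U"
      using \<open>open U\<close> open_contains_ball by blast
    hence "bounded (- inversion_vimage a U)"
      by (meson Compl_inversion_vimage_subset_cball bounded_cball bounded_subset)
    moreover have "closed (- inversion_vimage a U)"
      using \<open>open U\<close> by (intro closed_Compl open_inversion_vimage)
    ultimately show "compact (- inversion_vimage a U)"
      by (simp add: compact_eq_bounded_closed)
  qed
  hence "openin (subtopology riemann_sphere (- {Some a})) (T \<inter> - {Some a})"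
    by (intro openin_subtopology_Int) (simp add: openin_riemann_sphere)
  moreover have "T \<inter> - {Some a} =
      {x \<in> topspace (subtopology riemann_sphere (- {Some a})). inversion_chart a x \<in> U}"
    by (auto simp: T_def)
  ultimately show "openin (subtopology riemann_sphere (- {Some a}))
      {x \<in> topspace (subtopology riemann_sphere (- {Some a})). inversion_chart a x \<in> U}"
    by simp
qed

lemma inj_on_inversion_chart: "inj_on (inversion_chart a) (- {Some a})"
proof (rule inj_onI)
  fix x y
  assume "x \<in> - {Some a}" "y \<in> - {Some a}" "inversion_chart a x = inversion_chart a y"
  thus "x = y"
    by (cases x; cases y) (auto simp: inversion_chart_def)
qed

lemma finite_part_eq_inversion_vimage:
  assumes "Some a \<notin> \<gamma>"
  shows "finite_part \<gamma> = inversion_vimage a (inversion_chart a ` \<gamma>)"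
proof (intro set_eqI iffI)
  fix z
  assume "z \<in> finite_part \<gamma>"
  thus "z \<in> inversion_vimage a (inversion_chart a ` \<gamma>)"
    using assms by (force simp: finite_part_def inversion_vimage_def inversion_chart_def)
next
  fix z
  assume "z \<in> inversion_vimage a (inversion_chart a ` \<gamma>)"
  then obtain x where "x \<in> \<gamma>" "z \<noteq> a" "inversion_chart a x = inversion_chart a (Some z)"
    by (auto simp: inversion_vimage_def inversion_chart_def)
  moreover have "x \<noteq> Some a"
    using assms \<open>x \<in> \<gamma>\<close> by auto
  ultimately have "x = Some z"
    using inj_on_inversion_chart[of a] by (auto dest: inj_onD)
  thus "z \<in> finite_part \<gamma>"
    using \<open>x \<in> \<gamma>\<close> by (simp add: finite_part_def)
qed

lemma jordan_curve_RS_inversion_chart: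
  assumes "jordan_curve_RS \<gamma>" and "Some a \<notin> \<gamma>"
  obtains c where "simple_path c" "pathfinish c = pathstart c"
    "path_image c = inversion_chart a ` \<gamma>"
proof -
  obtain f where f: "continuous_map (subtopology euclidean (sphere (0::complex) 1)) riemann_sphere f"
    and "inj_on f (sphere 0 1)" and f_image: "f ` sphere 0 1 = \<gamma>"
    using assms(1) unfolding jordan_curve_RS_def by blast
  have "f ` sphere 0 1 \<subseteq> - {Some a}"
    using f_image assms(2) by blast
  hence "f \<in> topspace (subtopology euclidean (sphere 0 1)) \<rightarrow> - {Some a}"
    unfolding image_subset_iff by simp
  with f have "continuous_map (subtopology euclidean (sphere 0 1))
      (subtopology riemann_sphere (- {Some a})) f"
    by (rule continuous_map_into_subtopology)
  hence "continuous_map (subtopology euclidean (sphere 0 1)) euclidean (inversion_chart a \<circ> f)"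
    using continuous_map_inversion_chart by (rule continuous_map_compose)
  hence "continuous_on (path_image (circlepath 0 1)) (inversion_chart a \<circ> f)"
    by (simp add: continuous_map_iff_continuous)
  moreover have "inj_on (inversion_chart a \<circ> f) (path_image (circlepath 0 1))"
    using \<open>inj_on f (sphere 0 1)\<close> inj_on_subset[OF inj_on_inversion_chart \<open>f ` sphere 0 1 \<subseteq> - {Some a}\<close>]
    by (simp add: comp_inj_on)
  ultimately have "simple_path (inversion_chart a \<circ> f \<circ> circlepath 0 1)"
    by (intro simple_path_continuous_image) (simp_all add: simple_path_circlepath)
  moreover have "pathfinish (inversion_chart a \<circ> f \<circ> circlepath 0 1)
      = pathstart (inversion_chart a \<circ> f \<circ> circlepath 0 1)"
    by (simp add: pathfinish_compose pathstart_compose)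
  moreover have "path_image (inversion_chart a \<circ> f \<circ> circlepath 0 1) = inversion_chart a ` \<gamma>"
    by (simp add: path_image_compose image_comp flip: f_image)
  ultimately show ?thesis
    using that by blast
qed

section \<open>Jordan curves through infinity\<close>

lemma jordan_curve_RS_separation:
  assumes "jordan_curve_RS \<gamma>" and "None \<in> \<gamma>"
    and I: "I \<in> connected_components_of (subtopology riemann_sphere (- \<gamma>))"
    and E: "E \<in> connected_components_of (subtopology riemann_sphere (- \<gamma>))"
    and "I \<noteq> E"
  shows "jordan_separation (finite_part \<gamma>) (finite_part I) (finite_part E)"
proof -
  obtain x where "x \<in> I"
    using nonempty_connected_components_of[OF I] by blast
  moreover have "I \<subseteq> - \<gamma>"
    using connected_components_of_subset[OF I] by simp
  ultimately obtain a where "Some a \<notin> \<gamma>"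
    using \<open>None \<in> \<gamma>\<close> by (cases x) auto
  then obtain c where c: "simple_path c" "pathfinish c = pathstart c"
    and c_image: "path_image c = inversion_chart a ` \<gamma>"
    using jordan_curve_RS_inversion_chart[OF assms(1)] by blast
  have "0 \<in> path_image c"
    using \<open>None \<in> \<gamma>\<close> unfolding c_image by (force simp: inversion_chart_def)
  define W1 where "W1 = inversion_vimage a (inside (path_image c))"
  define W2 where "W2 = insert a (inversion_vimage a (outside (path_image c)))"
  have sep: "jordan_separation (finite_part \<gamma>) W1 W2" and "connected W1" "connected W2"
    using jordan_separation_inversion_vimage[OF c \<open>0 \<in> path_image c\<close>, of a]
    unfolding W1_def W2_def c_image finite_part_eq_inversion_vimage[OF \<open>Some a \<notin> \<gamma>\<close>] by auto
  have "openin riemann_sphere (Some ` W1)" "openin riemann_sphere (Some ` W2)"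
    using sep by (simp_all add: openin_riemann_sphere_Some_image jordan_separation_def)
  moreover have "connectedin riemann_sphere (Some ` W1)" "connectedin riemann_sphere (Some ` W2)"
    using \<open>connected W1\<close> \<open>connected W2\<close>
    by (auto intro: connectedin_continuous_map_image[OF continuous_map_Some]
        simp: connectedin_iff_connected)
  moreover have "Some ` W1 \<inter> Some ` W2 = {}"
    using sep by (auto simp: jordan_separation_def)
  moreover have "Some ` W1 \<union> Some ` W2 = - \<gamma>"
  proof (intro set_eqI)
    fix x
    show "x \<in> Some ` W1 \<union> Some ` W2 \<longleftrightarrow> x \<in> - \<gamma>"
      using sep \<open>None \<in> \<gamma>\<close> by (cases x) (auto simp: jordan_separation_def finite_part_def)
  qed
  ultimately have "I = Some ` W1 \<or> I = Some ` W2" and "E = Some ` W1 \<or> E = Some ` W2"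
    using connected_components_of_two_open_connected I E by metis+
  hence "finite_part I = W1 \<and> finite_part E = W2 \<or> finite_part I = W2 \<and> finite_part E = W1"
    using \<open>I \<noteq> E\<close> by auto
  thus ?thesis
    using sep jordan_separation_commute by metis
qed

lemma independent_jordan_curves_separation:
  assumes "independent_jordan_curves n \<gamma> Intr Ext" and "\<forall>k\<in>{1..n}. None \<in> \<gamma> k"
    and "k \<in> {1..n}"
  shows "jordan_separation (finite_part (\<gamma> k)) (finite_part (Intr k)) (finite_part (Ext k))"
  using assms by (intro jordan_curve_RS_separation) (auto simp: independent_jordan_curves_def)

lemma independent_jordan_curves_closure_Ext:
  assumes "independent_jordan_curves n \<gamma> Intr Ext" and "\<forall>k\<in>{1..n}. None \<in> \<gamma> k"
    and "k \<in> {1..n}"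
  shows "finite_part (riemann_sphere closure_of Ext k) = - finite_part (Intr k)"
  unfolding finite_part_closure_of
  using independent_jordan_curves_separation[OF assms] by (rule jordan_separation_closure)

lemma independent_jordan_curves_interiors_disjoint:
  assumes "independent_jordan_curves n \<gamma> Intr Ext"
    and "i \<in> {1..n}" and "j \<in> {1..n}" and "i \<noteq> j"
  shows "finite_part (Intr i) \<inter> finite_part (Intr j) = {}"
proof -
  have "Intr i \<inter> Intr j = {}"
    using assms by (simp add: independent_jordan_curves_def)
  thus ?thesis
    by (auto simp: finite_part_def)
qed

lemma independent_jordan_curves_closure_Inter_Ext:
  assumes "independent_jordan_curves n \<gamma> Intr Ext" and "\<forall>k\<in>{1..n}. None \<in> \<gamma> k"
  shows "finite_part (riemann_sphere closure_of (\<Inter>k\<in>{1..n}. Ext k))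
    = - (\<Union>k\<in>{1..n}. finite_part (Intr k))"
proof -
  have fin: "finite (finite_part (\<gamma> i) \<inter> finite_part (\<gamma> j))"
    if "i \<in> {1..n}" "j \<in> {1..n}" "i \<noteq> j" for i j
  proof -
    have "finite (Some -` (\<gamma> i \<inter> \<gamma> j))"
      using assms(1) that by (intro finite_vimageI) (auto simp: independent_jordan_curves_def)
    moreover have "finite_part (\<gamma> i) \<inter> finite_part (\<gamma> j) = Some -` (\<gamma> i \<inter> \<gamma> j)"
      by (auto simp: finite_part_def)
    ultimately show ?thesis
      by simp
  qed
  have "finite_part (\<Inter>k\<in>{1..n}. Ext k) = (\<Inter>k\<in>{1..n}. finite_part (Ext k))"
    by (auto simp: finite_part_def)
  also have "closure \<dots> = - (\<Union>k\<in>{1..n}. finite_part (Intr k))"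
    by (rule closure_Inter_jordan_exteriors[OF _ independent_jordan_curves_separation[OF assms]
        independent_jordan_curves_interiors_disjoint[OF assms(1)] fin])
      simp
  finally show ?thesis
    by (simp add: finite_part_closure_of)
qed

theorem proposition3p4:
  fixes p q :: "complex poly" and n :: nat
    and \<gamma> Intr Ext :: "nat \<Rightarrow> complex option set"
  assumes "q \<noteq> 0" and "coprime p q"
    and "rat_degree p q \<ge> 2"
    and "repelling_fixed_at_infinity p q"
    and "n \<ge> 2"
    and "independent_jordan_curves n \<gamma> Intr Ext"
    and "\<forall>k\<in>{1..n}. None \<in> \<gamma> k"
    and "\<forall>z. poly q z \<noteq> 0 \<and> rat_fun p q z = z \<longrightarrow> Some z \<in> (\<Union>k\<in>{1..n}. Intr k)"
    and "\<forall>k\<in>{1..n}.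
           pole_count p q (finite_part (riemann_sphere closure_of Ext k)) =
           fixpt_count p q (finite_part (riemann_sphere closure_of Ext k))"
  shows "pole_count p q (finite_part (riemann_sphere closure_of (\<Inter>k\<in>{1..n}. Ext k))) = n - 1"
proof -
  define r where "r = p - [:0, 1:] * q"
  define I where "I k = finite_part (Intr k)" for k
  have deg: "degree r = Suc (degree q)"
    unfolding r_def using assms(1,4) by (rule degree_fixpoint_poly)
  hence "r \<noteq> 0"
    by auto
  have roots: "{z. poly r z = 0} \<subseteq> (\<Union>k\<in>{1..n}. I k)"
  proof
    fix z
    assume "z \<in> {z. poly r z = 0}"
    hence "Some z \<in> (\<Union>k\<in>{1..n}. Intr k)"
      using assms(8) fixpoint_poly_root_imp_fixpoint[OF assms(2)] by (simp add: r_def)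
    thus "z \<in> (\<Union>k\<in>{1..n}. I k)"
      by (auto simp: I_def finite_part_def)
  qed
  have balanced: "root_count q (- I k) = root_count r (- I k)" if "k \<in> {1..n}" for k
    using bspec[OF assms(9) that] independent_jordan_curves_closure_Ext[OF assms(6,7) that]
    by (simp add: I_def r_def pole_count_eq_root_count fixpt_count_eq_root_count)
  have "root_count q (- (\<Union>k\<in>{1..n}. I k)) = card {1..n} - 1"
    using independent_jordan_curves_interiors_disjoint[OF assms(6)] roots balanced
    by (intro root_count_Compl_Union[OF assms(1) \<open>r \<noteq> 0\<close> deg]) (auto simp: I_def)
  thus ?thesis
    using independent_jordan_curves_closure_Inter_Ext[OF assms(6,7)]
    by (simp add: pole_count_eq_root_count I_def)
qed

end
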